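(* Let $p\in(0,1)$ and let $f\colon(\{0,1\}^n,\mu_p)\to\{0,1\}$ with $\mu_p(f)>0$ and $m=m(f)>1/p^2$. If for some $S\subseteq[n]$ with $|S|\le\frac{1}{4p}$ we have $\frac{\mu_p(f_{S\to0})}{\mu_p(f)}<\frac14$, then $\mu_p(f)<\exp(-0.001\sqrt m)$.
   Context: $\mu_p$ is the $p$-biased product measure on $\{0,1\}^n$, $\mu_p(f)=\mathbb{E}_{\mu_p}f$, and $f_{S\to0}$ is the restriction fixing all coordinates in $S$ to $0$ (its measure is the $\mu_p$-expectation over the remaining coordinates). With $\chi_i(x)=\frac{x_i-p}{\sqrt{p(1-p)}}$, $\hat f(\{i\})=\mathbb{E}_{\mu_p}[f\chi_i]$; $\delta=\max_i|\hat f(\{i\})|$ and $m(f)=|\{i:\hat f(\{i\})^2\ge\delta^2/2\}|$. *)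

theory Defs
  imports Complex_Main
begin

text \<open>Points of the cube {0,1}^I are encoded as subsets x of the coordinate set I
  (x = set of coordinates equal to 1). Boolean functions are f :: nat set => bool.\<close>

definition pmeasure :: "real \<Rightarrow> nat set \<Rightarrow> (nat set \<Rightarrow> real) \<Rightarrow> real" where
  "pmeasure p I g = (\<Sum>x\<in>Pow I. p ^ card x * (1 - p) ^ (card I - card x) * g x)"

definition mu :: "real \<Rightarrow> nat \<Rightarrow> (nat set \<Rightarrow> bool) \<Rightarrow> real" where
  "mu p n f = pmeasure p {..<n} (\<lambda>x. of_bool (f x))"

text \<open>mu_p(f_{S->0}): expectation over the coordinates outside S, those in S fixed to 0.\<close>
definition mu_restr0 :: "real \<Rightarrow> nat \<Rightarrow> (nat set \<Rightarrow> bool) \<Rightarrow> nat set \<Rightarrow> real" where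
  "mu_restr0 p n f S = pmeasure p ({..<n} - S) (\<lambda>x. of_bool (f x))"

definition chi :: "real \<Rightarrow> nat \<Rightarrow> nat set \<Rightarrow> real" where
  "chi p i x = (of_bool (i \<in> x) - p) / sqrt (p * (1 - p))"

definition fhat1 :: "real \<Rightarrow> nat \<Rightarrow> (nat set \<Rightarrow> bool) \<Rightarrow> nat \<Rightarrow> real" where
  "fhat1 p n f i = pmeasure p {..<n} (\<lambda>x. of_bool (f x) * chi p i x)"

definition delta :: "real \<Rightarrow> nat \<Rightarrow> (nat set \<Rightarrow> bool) \<Rightarrow> real" where
  "delta p n f = Max ((\<lambda>i. \<bar>fhat1 p n f i\<bar>) ` {..<n})"

definition mcount :: "real \<Rightarrow> nat \<Rightarrow> (nat set \<Rightarrow> bool) \<Rightarrow> nat" where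
  "mcount p n f = card {i\<in>{..<n}. (fhat1 p n f i)\<^sup>2 \<ge> (delta p n f)\<^sup>2 / 2}"

end

theory Submission
  imports Defs
begin

text \<open>Let \<open>\<mu> = \<mu>\<^sub>p(f)\<close>, \<open>\<sigma> = sqrt (p (1 - p))\<close> and let \<open>a i = E[f (x\<^sub>i - p)] = \<sigma> f\<^sup>^(i)\<close>.
  Since \<open>\<Sum>i\<in>S. (x\<^sub>i - p) \<ge> 1 - p |S|\<close> unless \<open>x \<inter> S = {}\<close>, the \<open>a i\<close> with \<open>i \<in> S\<close> add up
  to more than \<open>\<mu> - \<mu>(f\<^sub>S\<^sub>\<rightarrow>\<^sub>0) - \<mu>/4 > \<mu>/2\<close>; each is at most \<open>\<sigma> \<delta>\<close> and \<open>|S| \<le> 1/(4p)\<close>,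
  so \<open>\<sigma> \<delta> > 2 p \<mu>\<close>. On the \<open>m\<close> coordinates counted by \<open>m(f)\<close> we have \<open>|f\<^sup>^(i)| \<ge> 0.7 \<delta>\<close>,
  so \<open>g = \<Sum> sgn (f\<^sup>^(i)) (x\<^sub>i - p)\<close> over them has mean \<open>c > 1.4 m p\<close> under the density
  \<open>f / \<mu>\<close>. Jensen gives \<open>\<mu> exp c \<le> E[exp g]\<close>, and independence of the coordinates gives
  \<open>E[exp g] \<le> exp (p m)\<close>. Hence \<open>\<mu> < exp (-0.4 p m)\<close>, and \<open>p m > sqrt m\<close> as \<open>m > 1/p\<^sup>2\<close>.\<close>

lemma pmeasure_cong:
  "(\<And>x. x \<in> Pow I \<Longrightarrow> g x = h x) \<Longrightarrow> pmeasure p I g = pmeasure p I h"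
  unfolding pmeasure_def by (rule sum.cong) auto

lemma pmeasure_cmult: "pmeasure p I (\<lambda>x. c * g x) = c * pmeasure p I g"
  unfolding pmeasure_def by (simp add: sum_distrib_left algebra_simps)

lemma pmeasure_add: "pmeasure p I (\<lambda>x. g x + h x) = pmeasure p I g + pmeasure p I h"
  unfolding pmeasure_def by (simp add: sum.distrib algebra_simps)

lemma pmeasure_diff: "pmeasure p I (\<lambda>x. g x - h x) = pmeasure p I g - pmeasure p I h"
  unfolding pmeasure_def by (simp add: sum_subtractf algebra_simps)

lemma pmeasure_sum: "pmeasure p I (\<lambda>x. \<Sum>i\<in>T. g i x) = (\<Sum>i\<in>T. pmeasure p I (g i))"
  unfolding pmeasure_def by (simp add: sum_distrib_left sum.swap[of _ T])

lemma pmeasure_mono: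
  assumes "0 \<le> p" "p \<le> 1" "\<And>x. x \<in> Pow I \<Longrightarrow> g x \<le> h x"
  shows "pmeasure p I g \<le> pmeasure p I h"
  unfolding pmeasure_def by (rule sum_mono) (use assms in \<open>auto intro!: mult_left_mono\<close>)

lemma pmeasure_nonneg:
  assumes "0 \<le> p" "p \<le> 1" "\<And>x. x \<in> Pow I \<Longrightarrow> 0 \<le> g x"
  shows "0 \<le> pmeasure p I g"
  unfolding pmeasure_def by (rule sum_nonneg) (use assms in auto)

lemma pmeasure_insert:
  assumes "finite I" "a \<notin> I"
  shows "pmeasure p (insert a I) g
    = p * pmeasure p I (\<lambda>x. g (insert a x)) + (1 - p) * pmeasure p I g"
proof -
  let ?w = "\<lambda>x. p ^ card x * (1 - p) ^ (card (insert a I) - card x) * g x"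
  have inj: "inj_on (insert a) (Pow I)" and disj: "Pow I \<inter> insert a ` Pow I = {}"
    using assms(2) by (auto simp: inj_on_def)
  have cI: "card (insert a I) = Suc (card I)" using assms by simp
  have "pmeasure p (insert a I) g = sum ?w (Pow I) + sum ?w (insert a ` Pow I)"
    unfolding pmeasure_def Pow_insert using assms(1) disj by (simp add: sum.union_disjoint)
  also have "sum ?w (Pow I) = (1 - p) * pmeasure p I g"
    unfolding pmeasure_def sum_distrib_left
  proof (rule sum.cong)
    fix x assume "x \<in> Pow I"
    hence "card x \<le> card I" using assms(1) by (simp add: card_mono)
    hence "card (insert a I) - card x = Suc (card I - card x)" using cI by simp
    thus "?w x = (1 - p) * (p ^ card x * (1 - p) ^ (card I - card x) * g x)" by simp
  qed simp
  also have "sum ?w (insert a ` Pow I) = p * pmeasure p I (\<lambda>x. g (insert a x))"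
    unfolding pmeasure_def sum_distrib_left sum.reindex[OF inj] o_def
  proof (rule sum.cong)
    fix x assume "x \<in> Pow I"
    hence "finite x" "a \<notin> x" using assms finite_subset by auto
    hence "card (insert a x) = Suc (card x)" by simp
    thus "?w (insert a x) = p * (p ^ card x * (1 - p) ^ (card I - card x) * g (insert a x))"
      using cI by simp
  qed simp
  finally show ?thesis by simp
qed

lemma pmeasure_prod:
  assumes "finite I"
  shows "pmeasure p I (\<lambda>x. \<Prod>i\<in>I. h i (i \<in> x)) = (\<Prod>i\<in>I. p * h i True + (1 - p) * h i False)"
  using assms
proof (induction I rule: finite_induct)
  case empty
  then show ?case by (simp add: pmeasure_def)
next
  case (insert a I)
  have "pmeasure p I (\<lambda>x. \<Prod>i\<in>insert a I. h i (i \<in> insert a x))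
      = pmeasure p I (\<lambda>x. h a True * (\<Prod>i\<in>I. h i (i \<in> x)))"
  proof (rule pmeasure_cong)
    fix x
    have "(\<Prod>i\<in>I. h i (i \<in> insert a x)) = (\<Prod>i\<in>I. h i (i \<in> x))"
    proof (rule prod.cong)
      fix i assume "i \<in> I"
      hence "i \<noteq> a" using insert.hyps(2) by auto
      thus "h i (i \<in> insert a x) = h i (i \<in> x)" by simp
    qed simp
    thus "(\<Prod>i\<in>insert a I. h i (i \<in> insert a x)) = h a True * (\<Prod>i\<in>I. h i (i \<in> x))"
      using insert.hyps by simp
  qed
  moreover have "pmeasure p I (\<lambda>x. \<Prod>i\<in>insert a I. h i (i \<in> x))
      = pmeasure p I (\<lambda>x. h a False * (\<Prod>i\<in>I. h i (i \<in> x)))"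
  proof (rule pmeasure_cong)
    fix x assume "x \<in> Pow I"
    hence "a \<notin> x" using insert.hyps(2) by auto
    thus "(\<Prod>i\<in>insert a I. h i (i \<in> x)) = h a False * (\<Prod>i\<in>I. h i (i \<in> x))"
      using insert.hyps by simp
  qed
  ultimately show ?case
    using insert by (simp add: pmeasure_insert pmeasure_cmult algebra_simps)
qed

lemma pmeasure_avoiding:
  assumes "finite S" "finite J" "S \<inter> J = {}"
  shows "pmeasure p (J \<union> S) (\<lambda>x. of_bool (x \<inter> S = {}) * g x) = (1 - p) ^ card S * pmeasure p J g"
  using assms
proof (induction S rule: finite_induct)
  case empty
  then show ?case by simp
next
  case (insert a S)
  have fin: "finite (J \<union> S)" "a \<notin> J \<union> S" using insert by auto
  have "pmeasure p (J \<union> S) (\<lambda>x. of_bool (x \<inter> insert a S = {}) * g x)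
      = pmeasure p (J \<union> S) (\<lambda>x. of_bool (x \<inter> S = {}) * g x)"
    by (rule pmeasure_cong) (use fin in auto)
  moreover have "pmeasure p (J \<union> S) (\<lambda>x. of_bool (insert a x \<inter> insert a S = {}) * g (insert a x)) = 0"
    by (simp add: pmeasure_def)
  moreover have "J \<union> insert a S = insert a (J \<union> S)" by auto
  ultimately show ?case
    using insert by (simp add: pmeasure_insert[OF fin])
qed

text \<open>Jensen's inequality for \<open>exp\<close> under the density \<open>F / E F\<close>, proved with the
  tangent line of \<open>exp\<close> at the \<open>F\<close>-weighted mean \<open>c\<close> of \<open>g\<close>.\<close>
lemma pmeasure_exp_ge:
  assumes "0 \<le> p" "p \<le> 1" "\<And>x. 0 \<le> F x" "\<And>x. F x \<le> 1" "pmeasure p I F > 0"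
  shows "pmeasure p I F * exp (pmeasure p I (\<lambda>x. F x * g x) / pmeasure p I F)
    \<le> pmeasure p I (\<lambda>x. exp (g x))"
proof -
  define c where "c = pmeasure p I (\<lambda>x. F x * g x) / pmeasure p I F"
  have "pmeasure p I F * exp c = pmeasure p I (\<lambda>x. exp c * ((1 - c) * F x + F x * g x))"
    unfolding pmeasure_cmult pmeasure_add c_def using assms(5) by (simp add: field_simps)
  also have "\<dots> \<le> pmeasure p I (\<lambda>x. exp (g x))"
  proof (rule pmeasure_mono[OF assms(1,2)])
    fix x
    define y where "y = exp c * (1 + g x - c)"
    have "1 + g x - c \<le> exp (g x - c)" using exp_ge_add_one_self[of "g x - c"] by linarith
    hence "y \<le> exp c * exp (g x - c)" unfolding y_def by (intro mult_left_mono) auto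
    also have "\<dots> = exp (g x)" by (simp flip: exp_add)
    finally have "y \<le> exp (g x)" .
    moreover have "F x * y \<le> max y 0"
      using assms(3,4)[of x] mult_left_le_one_le[of y "F x"] mult_nonneg_nonpos[of "F x" y]
      by (cases "0 \<le> y") auto
    moreover have "exp c * ((1 - c) * F x + F x * g x) = F x * y"
      unfolding y_def by (simp add: algebra_simps)
    ultimately show "exp c * ((1 - c) * F x + F x * g x) \<le> exp (g x)"
      by (smt (verit) exp_gt_zero)
  qed
  finally show ?thesis unfolding c_def .
qed

lemma bernoulli_exp_moment_le:
  fixes p s :: real
  assumes "0 < p" "p < 1" "s = 1 \<or> s = -1"
  shows "p * exp (s * (1 - p)) + (1 - p) * exp (- s * p) \<le> exp p"
  using assms(3)
proof
  assume s: "s = 1"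
  have "p * exp 1 \<le> p * 3" using exp_le assms by (intro mult_left_mono) auto
  moreover have "1 + 2 * p \<le> exp (2 * p)" using exp_ge_add_one_self[of "2 * p"] by simp
  ultimately have "p * exp 1 + (1 - p) \<le> exp (2 * p)" by linarith
  hence "exp (- p) * (p * exp 1 + (1 - p)) \<le> exp (- p) * exp (2 * p)" by simp
  thus ?thesis using s by (simp add: algebra_simps flip: exp_add)
next
  assume s: "s = -1"
  have "p * exp (p - 1) + (1 - p) * exp p \<le> p * exp p + (1 - p) * exp p"
    using assms by (intro add_right_mono mult_left_mono) auto
  thus ?thesis using s by (simp add: algebra_simps)
qed

lemma pmeasure_exp_linear:
  assumes "finite I" "T \<subseteq> I"
  shows "pmeasure p I (\<lambda>x. exp (\<Sum>i\<in>T. t i * (of_bool (i \<in> x) - p)))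
    = (\<Prod>i\<in>T. p * exp (t i * (1 - p)) + (1 - p) * exp (- t i * p))"
proof -
  define h where "h i b = (if i \<in> T then exp (t i * (of_bool b - p)) else 1)" for i b
  have fin: "finite T" using assms finite_subset by auto
  have "pmeasure p I (\<lambda>x. exp (\<Sum>i\<in>T. t i * (of_bool (i \<in> x) - p)))
      = pmeasure p I (\<lambda>x. \<Prod>i\<in>I. h i (i \<in> x))"
    using assms fin by (simp add: exp_sum h_def prod.inter_restrict[symmetric] Int_absorb1)
  also have "\<dots> = (\<Prod>i\<in>I. p * h i True + (1 - p) * h i False)"
    by (rule pmeasure_prod[OF assms(1)])
  also have "\<dots> = (\<Prod>i\<in>I. if i \<in> T then p * exp (t i * (1 - p)) + (1 - p) * exp (- t i * p) else 1)"
    by (rule prod.cong) (auto simp: h_def)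
  also have "\<dots> = (\<Prod>i\<in>T. p * exp (t i * (1 - p)) + (1 - p) * exp (- t i * p))"
    using assms by (simp add: prod.inter_restrict[symmetric] Int_absorb1)
  finally show ?thesis .
qed

lemma pmeasure_exp_signed_sum_le:
  assumes "0 < p" "p < 1" "finite I" "T \<subseteq> I" "\<And>i. i \<in> T \<Longrightarrow> s i = 1 \<or> s i = -1"
  shows "pmeasure p I (\<lambda>x. exp (\<Sum>i\<in>T. s i * (of_bool (i \<in> x) - p))) \<le> exp (p * card T)"
proof -
  have "(\<Prod>i\<in>T. p * exp (s i * (1 - p)) + (1 - p) * exp (- s i * p)) \<le> (\<Prod>i\<in>T. exp p)"
    using assms bernoulli_exp_moment_le by (intro prod_mono) (simp add: add_nonneg_nonneg)
  thus ?thesis by (simp add: pmeasure_exp_linear assms mult.commute[of p] exp_of_nat_mult)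
qed

lemma fhat1_eq:
  "fhat1 p n f i
    = pmeasure p {..<n} (\<lambda>x. of_bool (f x) * (of_bool (i \<in> x) - p)) / sqrt (p * (1 - p))"
proof -
  have "fhat1 p n f i
      = pmeasure p {..<n} (\<lambda>x. 1 / sqrt (p * (1 - p)) * (of_bool (f x) * (of_bool (i \<in> x) - p)))"
    unfolding fhat1_def chi_def by (rule pmeasure_cong) simp
  thus ?thesis unfolding pmeasure_cmult by simp
qed

lemma abs_fhat1_le_delta: "i < n \<Longrightarrow> \<bar>fhat1 p n f i\<bar> \<le> delta p n f"
  unfolding delta_def by (rule Max_ge) auto

lemma sum_correlations_ge:
  assumes "finite S" "0 \<le> p" "p \<le> 1" "\<And>x. 0 \<le> F x"
  shows "pmeasure p I F - pmeasure p I (\<lambda>x. of_bool (x \<inter> S = {}) * F x) - p * card S * pmeasure p I F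
    \<le> (\<Sum>i\<in>S. pmeasure p I (\<lambda>x. F x * (of_bool (i \<in> x) - p)))"
proof -
  have "pmeasure p I F - pmeasure p I (\<lambda>x. of_bool (x \<inter> S = {}) * F x) - p * card S * pmeasure p I F
      = pmeasure p I (\<lambda>x. F x - of_bool (x \<inter> S = {}) * F x - p * card S * F x)"
    by (simp only: pmeasure_diff pmeasure_cmult)
  also have "\<dots> = pmeasure p I (\<lambda>x. F x * (1 - of_bool (x \<inter> S = {}) - p * card S))"
    by (rule pmeasure_cong) (simp add: algebra_simps)
  also have "\<dots> \<le> pmeasure p I (\<lambda>x. F x * (card (S \<inter> x) - p * card S))"
  proof (rule pmeasure_mono[OF assms(2,3)])
    fix x
    have "x \<inter> S \<noteq> {} \<Longrightarrow> 1 \<le> card (S \<inter> x)"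
      using assms(1) by (simp add: Suc_leI card_gt_0_iff Int_commute)
    hence "1 - of_bool (x \<inter> S = {}) \<le> real (card (S \<inter> x))" by (cases "x \<inter> S = {}") auto
    thus "F x * (1 - of_bool (x \<inter> S = {}) - p * card S) \<le> F x * (card (S \<inter> x) - p * card S)"
      using assms(4) by (intro mult_left_mono) auto
  qed
  also have "\<dots> = (\<Sum>i\<in>S. pmeasure p I (\<lambda>x. F x * (of_bool (i \<in> x) - p)))"
    unfolding pmeasure_sum[symmetric] using assms(1)
    by (intro pmeasure_cong) (simp add: sum_distrib_left[symmetric] sum_subtractf algebra_simps)
  finally show ?thesis .
qed

lemma pmeasure_avoiding_le_mu_restr0:
  assumes "0 \<le> p" "p \<le> 1" "S \<subseteq> {..<n}"
  shows "pmeasure p {..<n} (\<lambda>x. of_bool (x \<inter> S = {}) * of_bool (f x)) \<le> mu_restr0 p n f S"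
proof -
  have "finite S" using assms(3) finite_subset by auto
  moreover have "({..<n} - S) \<union> S = {..<n}" using assms(3) by auto
  ultimately have "pmeasure p {..<n} (\<lambda>x. of_bool (x \<inter> S = {}) * of_bool (f x))
      = (1 - p) ^ card S * mu_restr0 p n f S"
    using pmeasure_avoiding[of S "{..<n} - S" p] unfolding mu_restr0_def by auto
  moreover have "0 \<le> mu_restr0 p n f S"
    unfolding mu_restr0_def using assms by (intro pmeasure_nonneg) auto
  moreover have "(1 - p) ^ card S \<le> 1" using assms by (simp add: power_le_one)
  ultimately show ?thesis
    using assms(2) mult_left_le_one_le[of "mu_restr0 p n f S" "(1 - p) ^ card S"] by simp
qed

lemma delta_gt_of_restriction_small:
  assumes "0 < p" "p < 1" "mu p n f > 0"
    and "S \<subseteq> {..<n}" "real (card S) \<le> 1 / (4 * p)"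
    and "mu_restr0 p n f S / mu p n f < 1 / 4"
  shows "2 * p * mu p n f < sqrt (p * (1 - p)) * delta p n f"
proof -
  define \<mu> where "\<mu> = mu p n f"
  define \<sigma> where "\<sigma> = sqrt (p * (1 - p))"
  define k where "k = real (card S)"
  define corr where "corr i = pmeasure p {..<n} (\<lambda>x. of_bool (f x) * (of_bool (i \<in> x) - p))" for i
  have \<mu>: "\<mu> = pmeasure p {..<n} (\<lambda>x. of_bool (f x))" "\<mu> > 0"
    unfolding \<mu>_def using assms(3) by (auto simp: mu_def)
  have \<sigma>: "\<sigma> > 0" unfolding \<sigma>_def using assms(1,2) by simp
  have pk: "p * k \<le> 1 / 4" unfolding k_def using assms(1,5) by (simp add: field_simps)
  have restr: "mu_restr0 p n f S < \<mu> / 4" using assms(6) \<mu>(2) by (simp add: \<mu>_def field_simps)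
  have pk\<mu>: "p * k * \<mu> \<le> \<mu> / 4" using pk \<mu>(2) mult_right_mono[of "p * k" "1/4" \<mu>] by simp
  have "\<mu> - \<mu> / 4 - \<mu> / 4 < sum corr S"
  proof -
    have "\<mu> - mu_restr0 p n f S - p * k * \<mu> \<le> sum corr S"
      using sum_correlations_ge[of S p "\<lambda>x. of_bool (f x)" "{..<n}"]
        pmeasure_avoiding_le_mu_restr0[of p S n f] assms(1,2,4) finite_subset[OF assms(4)]
      unfolding corr_def \<mu>(1) k_def by simp
    thus ?thesis using restr pk\<mu> by linarith
  qed
  also have "sum corr S \<le> k * (\<sigma> * delta p n f)"
  proof -
    have "corr i \<le> \<sigma> * delta p n f" if "i \<in> S" for i
    proof -
      have "corr i = \<sigma> * fhat1 p n f i" using \<sigma> by (simp add: fhat1_eq corr_def flip: \<sigma>_def)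
      also have "\<dots> \<le> \<sigma> * delta p n f"
        using abs_fhat1_le_delta[of i n p f] that assms(4) \<sigma> by (intro mult_left_mono) auto
      finally show ?thesis .
    qed
    thus ?thesis using sum_mono[of S corr "\<lambda>_. \<sigma> * delta p n f"] by (simp add: k_def)
  qed
  finally have "\<mu> / 2 < k * (\<sigma> * delta p n f)" by simp
  moreover have "k * (2 * p * \<mu>) = 2 * (p * k * \<mu>)" by (simp add: algebra_simps)
  ultimately have "k * (2 * p * \<mu>) < k * (\<sigma> * delta p n f)" using pk\<mu> by linarith
  thus ?thesis unfolding \<mu>_def \<sigma>_def k_def by (simp add: mult_less_cancel_left)
qed

text \<open>The constant \<open>0.7\<close> is a rational lower bound for \<open>1/sqrt 2\<close>.\<close>
lemma mu_exp_mcount_le: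
  fixes p :: real
  assumes "0 < p" "p < 1" "mu p n f > 0"
  shows "mu p n f * exp (0.7 * mcount p n f * (sqrt (p * (1 - p)) * delta p n f) / mu p n f)
    \<le> exp (p * real (mcount p n f))"
proof -
  define \<mu> where "\<mu> = mu p n f"
  define \<sigma> where "\<sigma> = sqrt (p * (1 - p))"
  define \<delta> where "\<delta> = delta p n f"
  define F where "F x = (of_bool (f x) :: real)" for x
  define T where "T = {i\<in>{..<n}. (fhat1 p n f i)\<^sup>2 \<ge> \<delta>\<^sup>2 / 2}"
  define s where "s i = (if fhat1 p n f i \<ge> 0 then 1 else - 1 :: real)" for i
  define g where "g x = (\<Sum>i\<in>T. s i * (of_bool (i \<in> x) - p))" for x
  have \<mu>: "\<mu> = pmeasure p {..<n} F" "\<mu> > 0"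
    unfolding \<mu>_def F_def using assms(3) by (auto simp: mu_def)
  have m: "mcount p n f = card T" unfolding mcount_def T_def \<delta>_def ..
  have \<sigma>: "\<sigma> > 0" unfolding \<sigma>_def using assms(1,2) by simp
  have "0.7 * card T * (\<sigma> * \<delta>) \<le> \<sigma> * (\<Sum>i\<in>T. \<bar>fhat1 p n f i\<bar>)"
  proof -
    have "0.7 * \<delta> \<le> \<bar>fhat1 p n f i\<bar>" if "i \<in> T" for i
    proof -
      have "\<delta>\<^sup>2 \<le> 2 * (fhat1 p n f i)\<^sup>2" using that by (simp add: T_def)
      moreover have "(0.7 * \<delta>)\<^sup>2 = 49 / 100 * \<delta>\<^sup>2" by (simp add: power2_eq_square)
      ultimately have "(0.7 * \<delta>)\<^sup>2 \<le> (fhat1 p n f i)\<^sup>2"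
        using zero_le_power2[of \<delta>] by linarith
      hence "\<bar>0.7 * \<delta>\<bar> \<le> \<bar>fhat1 p n f i\<bar>" by (simp only: abs_le_square_iff)
      thus ?thesis by linarith
    qed
    hence "card T * (0.7 * \<delta>) \<le> (\<Sum>i\<in>T. \<bar>fhat1 p n f i\<bar>)"
      using sum_mono[of T "\<lambda>_. 0.7 * \<delta>"] by simp
    thus ?thesis using \<sigma> mult_left_mono[of _ _ \<sigma>] by (simp add: algebra_simps)
  qed
  also have "\<sigma> * (\<Sum>i\<in>T. \<bar>fhat1 p n f i\<bar>) = pmeasure p {..<n} (\<lambda>x. F x * g x)"
    unfolding g_def sum_distrib_left pmeasure_sum pmeasure_cmult[symmetric]
  proof (rule sum.cong)
    fix i
    have "\<sigma> * \<bar>fhat1 p n f i\<bar> = s i * pmeasure p {..<n} (\<lambda>x. F x * (of_bool (i \<in> x) - p))"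
    proof -
      have "fhat1 p n f i = pmeasure p {..<n} (\<lambda>x. F x * (of_bool (i \<in> x) - p)) / \<sigma>"
        unfolding fhat1_eq F_def \<sigma>_def ..
      thus ?thesis using \<sigma> by (auto simp: s_def abs_if zero_le_divide_iff divide_less_0_iff)
    qed
    thus "\<sigma> * \<bar>fhat1 p n f i\<bar> = pmeasure p {..<n} (\<lambda>x. F x * (s i * (of_bool (i \<in> x) - p)))"
      by (simp add: pmeasure_cmult[symmetric] algebra_simps)
  qed simp
  finally have "0.7 * card T * (\<sigma> * \<delta>) / \<mu> \<le> pmeasure p {..<n} (\<lambda>x. F x * g x) / \<mu>"
    using \<mu>(2) by (rule divide_right_mono[OF _ less_imp_le])
  hence "\<mu> * exp (0.7 * card T * (\<sigma> * \<delta>) / \<mu>)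
      \<le> \<mu> * exp (pmeasure p {..<n} (\<lambda>x. F x * g x) / \<mu>)"
    using \<mu>(2) by simp
  also have "\<dots> \<le> pmeasure p {..<n} (\<lambda>x. exp (g x))"
    using pmeasure_exp_ge[of p F "{..<n}" g] assms(1,2) \<mu> by (simp add: F_def)
  also have "\<dots> \<le> exp (p * card T)"
    unfolding g_def using assms(1,2) by (intro pmeasure_exp_signed_sum_le) (auto simp: T_def s_def)
  finally show ?thesis unfolding m \<mu>_def \<sigma>_def \<delta>_def .
qed

lemma sqrt_less_mult_of_inverse_square_less:
  fixes p m :: real
  assumes "0 < p" "1 / p\<^sup>2 < m"
  shows "sqrt m < p * m"
proof -
  have "0 < m" using assms less_trans[of 0 "1 / p\<^sup>2" m] by simp
  hence "1 < (p * sqrt m)\<^sup>2" using assms by (simp add: field_simps power_mult_distrib)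
  hence "1 < p * sqrt m"
    using assms(1) \<open>0 < m\<close> power_less_imp_less_base[of 1 2 "p * sqrt m"] by simp
  hence "sqrt m * 1 < sqrt m * (p * sqrt m)" using \<open>0 < m\<close> by (intro mult_strict_left_mono) auto
  also have "\<dots> = p * m" using \<open>0 < m\<close> by (simp add: algebra_simps)
  finally show ?thesis by simp
qed

theorem mainTheorem18:
  fixes p :: real and n :: nat and f :: "nat set \<Rightarrow> bool" and S :: "nat set"
  assumes "0 < p" "p < 1"
    and "mu p n f > 0"
    and "real (mcount p n f) > 1 / p\<^sup>2"
    and "S \<subseteq> {..<n}" "real (card S) \<le> 1 / (4 * p)"
    and "mu_restr0 p n f S / mu p n f < 1 / 4"
  shows "mu p n f < exp (- 0.001 * sqrt (real (mcount p n f)))"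
proof -
  define \<mu> where "\<mu> = mu p n f"
  define m where "m = real (mcount p n f)"
  have "m > 0" using assms(1,4) less_trans[of 0 "1 / p\<^sup>2" m] unfolding m_def by simp
  have "1.4 * m * p < 0.7 * m * (sqrt (p * (1 - p)) * delta p n f) / \<mu>"
    using delta_gt_of_restriction_small[OF assms(1-3,5-7)] \<open>m > 0\<close> assms(3)
    by (simp add: \<mu>_def field_simps)
  hence "\<mu> * exp (1.4 * m * p) < \<mu> * exp (0.7 * m * (sqrt (p * (1 - p)) * delta p n f) / \<mu>)"
    using assms(3) unfolding \<mu>_def by simp
  also have "\<dots> \<le> exp (p * m)"
    using mu_exp_mcount_le[OF assms(1-3)] unfolding \<mu>_def m_def .
  finally have "\<mu> * exp (1.4 * m * p) < exp (p * m)" .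
  moreover have "exp (p * m) = exp (1.4 * m * p) * exp (- 0.4 * (p * m))"
    by (simp add: algebra_simps flip: exp_add)
  ultimately have "\<mu> < exp (- 0.4 * (p * m))" by (simp add: mult.commute[of \<mu>])
  also have "\<dots> < exp (- 0.001 * sqrt m)"
  proof -
    have "sqrt m < p * m" using sqrt_less_mult_of_inverse_square_less assms(1,4) unfolding m_def .
    moreover have "0 < p * m" using assms(1) \<open>m > 0\<close> by simp
    ultimately show ?thesis by simp
  qed
  finally show ?thesis unfolding \<mu>_def m_def .
qed

end
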